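(* Consider the optimization problem $$\mathcal{P}_1:\ \min_{\{I_{G,i},I_{H,i},I_{D,i},p_{G,i},p_{H,i}\}_{i=1}^N}\ \sum_{n=1}^N \big(w_G\, p_{G,n}\tau + w_D I_{D,n}\big)$$ subject to, for all $i\in\mathcal{N}=\{1,\dots,N\}$: $I_{G,i}+I_{H,i}+I_{D,i}=1$; $\sum_{l=1}^{i} p_{H,l}\tau\le \sum_{n=1}^{i}E_{H,n}$; $\sum_{j\in\{G,H\}} I_{j,i}\, r(p_{j,i},h_{j,i})\ge (1-I_{D,i})R$; $0\le p_{j,i}\le p_j^{\max}$ for $j\in\{G,H\}$; $I_{j,i}\in\{0,1\}$ for $j\in\{G,H,D\}$. Consider also the zero-one integer program $$\hat{\mathcal{P}}_1:\ \min_{\{\alpha_i\}}\ \sum_{n=1}^N (1-\alpha_n)c_n\quad\text{s.t.}\quad \sum_{k=1}^{i}\alpha_k p^{inv}_{H,k}\tau\le\sum_{l=1}^{i}E_{H,l},\ \ \alpha_i p^{inv}_{H,i}\le p_H^{\max},\ \ \alpha_i\in\{0,1\},\ \ \forall i\in\mathcal{N},$$ where $p^{inv}_{j,i}=(2^{R/(W\tau)}-1)\sigma^2 h_{j,i}^{-1}$ for $j\in\{G,H\}$, $\kappa=\min\{p_G^{\max},\,w_D(w_G\tau)^{-1}\}$, and $c_i=w_D$ if $p^{inv}_{G,i}>\kappa$ and $c_i=w_G p^{inv}_{G,i}\tau$ if $p^{inv}_{G,i}\le\kappa$. Then $\mathcal{P}_1$ is equivalent to $\hat{\mathcal{P}}_1$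 in the following sense: for any feasible $\{\alpha_i\}$ of $\hat{\mathcal{P}}_1$, the assignment $I_{H,i}=\alpha_i$, $I_{G,i}=(1-\alpha_i)\mathbf{1}\{p^{inv}_{G,i}\le\kappa\}$, $I_{D,i}=1-I_{G,i}-I_{H,i}$, $p_{j,i}=I_{j,i}p^{inv}_{j,i}$ ($j\in\{G,H\}$) is the corresponding solution of $\mathcal{P}_1$; the two problems have the same optimal value; and if $\{\alpha_i\}$ is optimal for $\hat{\mathcal{P}}_1$, then the corresponding $\{I_{G,i},I_{H,i},I_{D,i}\}$, $\{p_{H,i}\}$, $\{p_{G,i}\}$ are optimal for $\mathcal{P}_1$.
   Context: A hybrid energy supply network: a grid-powered base station (GP-BS, index $G$) and an energy-harvesting base station (EH-BS, index $H$) serve one user over $N$ blocks of length $\tau>0$. In each block one packet of $R>0$ bits arrives; it is sent by the GP-BS ($I_{G,i}=1$), by the EH-BS ($I_{H,i}=1$), or dropped ($I_{D,i}=1$). $p_{G,i},p_{H,i}\ge 0$ are transmit powers, $p_G^{\max},p_H^{\max}>0$ peak powers, $E_{H,i}\ge0$ is the energy harvested by the EH-BS at the start of block $i$, $h_{G,i},h_{H,i}>0$ are the channel gains, and $r(p,h)=\tau W\log_2(1+h\sigma^{-2}p)$ with bandwidth $W>0$ and noise variance $\sigma^2>0$. The weights satisfy $w_G,w_D>0$. $\mathbf{1}\{\cdot\}$ is the indicator function. *)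

theory Defs
  imports Complex_Main
begin

text \<open>Blocks are indexed by 1..N. The noise variance sigma^2 is the parameter s2.
  A decision of P1 is a tuple (IG, IH, ID, pG, pH) of functions on block indices.\<close>

type_synonym decision =
  "(nat \<Rightarrow> real) \<times> (nat \<Rightarrow> real) \<times> (nat \<Rightarrow> real) \<times> (nat \<Rightarrow> real) \<times> (nat \<Rightarrow> real)"

definition rate :: "real \<Rightarrow> real \<Rightarrow> real \<Rightarrow> real \<Rightarrow> real \<Rightarrow> real" where
  "rate \<tau> W s2 p h = \<tau> * W * log 2 (1 + h * p / s2)"

definition feasP1 ::
  "nat \<Rightarrow> real \<Rightarrow> real \<Rightarrow> real \<Rightarrow> real \<Rightarrow> real \<Rightarrow> real \<Rightarrow>
   (nat \<Rightarrow> real) \<Rightarrow> (nat \<Rightarrow> real) \<Rightarrow> (nat \<Rightarrow> real) \<Rightarrow> decision \<Rightarrow> bool" where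
  "feasP1 N \<tau> W s2 R pGmax pHmax E hG hH d =
     (case d of (IG, IH, ID, pG, pH) \<Rightarrow>
       (\<forall>i\<in>{1..N}.
          IG i + IH i + ID i = 1
        \<and> (\<Sum>l=1..i. pH l * \<tau>) \<le> (\<Sum>n=1..i. E n)
        \<and> IG i * rate \<tau> W s2 (pG i) (hG i) + IH i * rate \<tau> W s2 (pH i) (hH i) \<ge> (1 - ID i) * R
        \<and> 0 \<le> pG i \<and> pG i \<le> pGmax
        \<and> 0 \<le> pH i \<and> pH i \<le> pHmax
        \<and> IG i \<in> {0, 1} \<and> IH i \<in> {0, 1} \<and> ID i \<in> {0, 1}))"

definition objP1 :: "nat \<Rightarrow> real \<Rightarrow> real \<Rightarrow> real \<Rightarrow> decision \<Rightarrow> real" where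
  "objP1 N \<tau> wG wD d =
     (case d of (IG, IH, ID, pG, pH) \<Rightarrow> (\<Sum>n=1..N. wG * pG n * \<tau> + wD * ID n))"

definition optP1 ::
  "nat \<Rightarrow> real \<Rightarrow> real \<Rightarrow> real \<Rightarrow> real \<Rightarrow> real \<Rightarrow> real \<Rightarrow> real \<Rightarrow> real \<Rightarrow>
   (nat \<Rightarrow> real) \<Rightarrow> (nat \<Rightarrow> real) \<Rightarrow> (nat \<Rightarrow> real) \<Rightarrow> decision \<Rightarrow> bool" where
  "optP1 N \<tau> W s2 R pGmax pHmax wG wD E hG hH d =
     (feasP1 N \<tau> W s2 R pGmax pHmax E hG hH d \<and>
      (\<forall>d'. feasP1 N \<tau> W s2 R pGmax pHmax E hG hH d' \<longrightarrow>
             objP1 N \<tau> wG wD d \<le> objP1 N \<tau> wG wD d'))"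

definition pinv :: "real \<Rightarrow> real \<Rightarrow> real \<Rightarrow> real \<Rightarrow> real \<Rightarrow> real" where
  "pinv \<tau> W s2 R h = (2 powr (R / (W * \<tau>)) - 1) * s2 / h"

definition kappa :: "real \<Rightarrow> real \<Rightarrow> real \<Rightarrow> real \<Rightarrow> real" where
  "kappa \<tau> pGmax wG wD = min pGmax (wD / (wG * \<tau>))"

definition cost :: "real \<Rightarrow> real \<Rightarrow> real \<Rightarrow> real \<Rightarrow> real \<Rightarrow> real \<Rightarrow> real \<Rightarrow> real \<Rightarrow> real" where
  "cost \<tau> W s2 R pGmax wG wD hGi =
     (if pinv \<tau> W s2 R hGi > kappa \<tau> pGmax wG wD then wD
      else wG * pinv \<tau> W s2 R hGi * \<tau>)"

definition feasP1hat ::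
  "nat \<Rightarrow> real \<Rightarrow> real \<Rightarrow> real \<Rightarrow> real \<Rightarrow> real \<Rightarrow>
   (nat \<Rightarrow> real) \<Rightarrow> (nat \<Rightarrow> real) \<Rightarrow> (nat \<Rightarrow> real) \<Rightarrow> bool" where
  "feasP1hat N \<tau> W s2 R pHmax E hH \<alpha> =
     (\<forall>i\<in>{1..N}.
        (\<Sum>k=1..i. \<alpha> k * pinv \<tau> W s2 R (hH k) * \<tau>) \<le> (\<Sum>l=1..i. E l)
      \<and> \<alpha> i * pinv \<tau> W s2 R (hH i) \<le> pHmax
      \<and> \<alpha> i \<in> {0, 1})"

definition objP1hat ::
  "nat \<Rightarrow> real \<Rightarrow> real \<Rightarrow> real \<Rightarrow> real \<Rightarrow> real \<Rightarrow> real \<Rightarrow> real \<Rightarrow>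
   (nat \<Rightarrow> real) \<Rightarrow> (nat \<Rightarrow> real) \<Rightarrow> real" where
  "objP1hat N \<tau> W s2 R pGmax wG wD hG \<alpha> =
     (\<Sum>n=1..N. (1 - \<alpha> n) * cost \<tau> W s2 R pGmax wG wD (hG n))"

definition optP1hat ::
  "nat \<Rightarrow> real \<Rightarrow> real \<Rightarrow> real \<Rightarrow> real \<Rightarrow> real \<Rightarrow> real \<Rightarrow> real \<Rightarrow> real \<Rightarrow>
   (nat \<Rightarrow> real) \<Rightarrow> (nat \<Rightarrow> real) \<Rightarrow> (nat \<Rightarrow> real) \<Rightarrow> (nat \<Rightarrow> real) \<Rightarrow> bool" where
  "optP1hat N \<tau> W s2 R pGmax pHmax wG wD E hG hH \<alpha> =
     (feasP1hat N \<tau> W s2 R pHmax E hH \<alpha> \<and>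
      (\<forall>\<beta>. feasP1hat N \<tau> W s2 R pHmax E hH \<beta> \<longrightarrow>
             objP1hat N \<tau> W s2 R pGmax wG wD hG \<alpha> \<le> objP1hat N \<tau> W s2 R pGmax wG wD hG \<beta>))"

definition assign ::
  "real \<Rightarrow> real \<Rightarrow> real \<Rightarrow> real \<Rightarrow> real \<Rightarrow> real \<Rightarrow> real \<Rightarrow>
   (nat \<Rightarrow> real) \<Rightarrow> (nat \<Rightarrow> real) \<Rightarrow> (nat \<Rightarrow> real) \<Rightarrow> decision" where
  "assign \<tau> W s2 R pGmax wG wD hG hH \<alpha> =
     (let IH = \<alpha>;
          IG = (\<lambda>i. (1 - \<alpha> i) * (if pinv \<tau> W s2 R (hG i) \<le> kappa \<tau> pGmax wG wD then 1 else 0));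
          ID = (\<lambda>i. 1 - IG i - IH i)
      in (IG, IH, ID,
          (\<lambda>i. IG i * pinv \<tau> W s2 R (hG i)),
          (\<lambda>i. IH i * pinv \<tau> W s2 R (hH i))))"

end

theory Submission
  imports Defs
begin

text \<open>Serving a packet over a channel with gain h costs at least the power pinv h, which is exactly
  enough. Hence in P1 the GP-BS should transmit at pinv whenever that is cheaper than dropping and
  within its peak power, i.e. when pinv \<le> kappa; otherwise the packet is dropped at cost wD. This
  makes the per-block cost of a packet not served by the EH-BS equal to c_i, and leaves only the
  binary choice alpha_i of serving it by the EH-BS. Conversely the EH indicator of any feasible
  decision of P1 is feasible for the 0-1 program and its cost is no larger, so both problems have
  the same infimum and optimal solutions correspond.\<close>

lemma INF_eq_of_reduction:
  fixes f :: "'a \<Rightarrow> 'c::conditionally_complete_linorder" and g :: "'b \<Rightarrow> 'c"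
  assumes "B \<noteq> {}" and "bdd_below (g ` B)"
    and forward: "\<And>b. b \<in> B \<Longrightarrow> \<phi> b \<in> A \<and> f (\<phi> b) = g b"
    and backward: "\<And>a. a \<in> A \<Longrightarrow> \<exists>b\<in>B. g b \<le> f a"
  shows "(INF a\<in>A. f a) = (INF b\<in>B. g b)"
proof (rule antisym)
  have "A \<noteq> {}" using \<open>B \<noteq> {}\<close> forward by blast
  obtain m where m: "\<And>b. b \<in> B \<Longrightarrow> m \<le> g b"
    using \<open>bdd_below (g ` B)\<close> by (auto simp: bdd_below_def)
  have "bdd_below (f ` A)"
  proof (rule bdd_belowI2)
    fix a assume "a \<in> A"
    then obtain b where "b \<in> B" "g b \<le> f a" using backward by blast
    then show "m \<le> f a" using m order_trans by blast
  qed
  show "(INF a\<in>A. f a) \<le> (INF b\<in>B. g b)"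
  proof (rule cINF_greatest[OF \<open>B \<noteq> {}\<close>])
    fix b assume "b \<in> B"
    then have "(INF a\<in>A. f a) \<le> f (\<phi> b)" using forward \<open>bdd_below (f ` A)\<close> by (blast intro: cINF_lower)
    then show "(INF a\<in>A. f a) \<le> g b" using forward \<open>b \<in> B\<close> by simp
  qed
  show "(INF b\<in>B. g b) \<le> (INF a\<in>A. f a)"
  proof (rule cINF_greatest[OF \<open>A \<noteq> {}\<close>])
    fix a assume "a \<in> A"
    then obtain b where "b \<in> B" "g b \<le> f a" using backward by blast
    then show "(INF b\<in>B. g b) \<le> f a"
      using \<open>bdd_below (g ` B)\<close> by (meson cINF_lower order_trans)
  qed
qed

lemma minimizer_of_reduction:
  fixes f :: "'a \<Rightarrow> 'c::preorder" and g :: "'b \<Rightarrow> 'c"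
  assumes forward: "\<And>b. b \<in> B \<Longrightarrow> \<phi> b \<in> A \<and> f (\<phi> b) = g b"
    and backward: "\<And>a. a \<in> A \<Longrightarrow> \<exists>b\<in>B. g b \<le> f a"
    and "b \<in> B" and min: "\<forall>b'\<in>B. g b \<le> g b'"
  shows "\<phi> b \<in> A \<and> (\<forall>a\<in>A. f (\<phi> b) \<le> f a)"
proof (intro conjI ballI)
  show "\<phi> b \<in> A" using forward \<open>b \<in> B\<close> by blast
  fix a assume "a \<in> A"
  then obtain b' where "b' \<in> B" "g b' \<le> f a" using backward by blast
  then show "f (\<phi> b) \<le> f a" using forward[OF \<open>b \<in> B\<close>] min order_trans by metis
qed

lemma rate_pinv:
  assumes "\<tau> > 0" "W > 0" "s2 > 0" "h > 0"
  shows "rate \<tau> W s2 (pinv \<tau> W s2 R h) h = R"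
proof -
  have "1 + h * pinv \<tau> W s2 R h / s2 = 2 powr (R / (W * \<tau>))"
    using assms by (simp add: pinv_def field_simps)
  then show ?thesis using assms by (simp add: rate_def)
qed

lemma pinv_nonneg:
  assumes "\<tau> > 0" "W > 0" "s2 > 0" "h > 0" "R \<ge> 0"
  shows "pinv \<tau> W s2 R h \<ge> 0"
proof -
  have "2 powr (R / (W * \<tau>)) \<ge> 1" using assms by (simp add: ge_one_powr_ge_zero)
  then show ?thesis using assms unfolding pinv_def by simp
qed

lemma pinv_le_of_rate_ge:
  assumes "\<tau> > 0" "W > 0" "s2 > 0" "h > 0" "p \<ge> 0"
    and "rate \<tau> W s2 p h \<ge> R"
  shows "pinv \<tau> W s2 R h \<le> p"
proof -
  have pos: "1 + h * p / s2 > 0" using assms by (simp add: add_pos_nonneg)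
  have "R / (W * \<tau>) \<le> log 2 (1 + h * p / s2)"
    using assms by (simp add: rate_def pos_divide_le_eq mult.commute mult.left_commute)
  then have "2 powr (R / (W * \<tau>)) \<le> 1 + h * p / s2"
    using pos by (simp add: le_log_iff)
  then have "(2 powr (R / (W * \<tau>)) - 1) * s2 \<le> h * p" using assms by (simp add: field_simps)
  then show ?thesis using assms unfolding pinv_def by (simp add: divide_le_eq mult.commute)
qed

lemma transmit_cost_le_wD:
  assumes "\<tau> > 0" "wG > 0" "p \<le> kappa \<tau> pGmax wG wD"
  shows "wG * p * \<tau> \<le> wD"
proof -
  have "p \<le> wD / (wG * \<tau>)" using assms(3) by (simp add: kappa_def)
  then show ?thesis using assms(1,2) by (simp add: le_divide_eq mult.commute mult.left_commute)
qed

lemma cost_le_wD: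
  assumes "\<tau> > 0" "wG > 0"
  shows "cost \<tau> W s2 R pGmax wG wD h \<le> wD"
  using transmit_cost_le_wD[OF assms, of "pinv \<tau> W s2 R h" pGmax wD] by (simp add: cost_def)

lemma cost_nonneg:
  assumes "\<tau> > 0" "W > 0" "s2 > 0" "h > 0" "R \<ge> 0" "wG \<ge> 0" "wD \<ge> 0"
  shows "cost \<tau> W s2 R pGmax wG wD h \<ge> 0"
  using pinv_nonneg[OF assms(1-5)] assms by (simp add: cost_def)

lemma cost_le_transmit:
  assumes "\<tau> > 0" "wG > 0"
    and "pinv \<tau> W s2 R h \<le> p" "p \<le> pGmax"
  shows "cost \<tau> W s2 R pGmax wG wD h \<le> wG * p * \<tau>"
proof (cases "pinv \<tau> W s2 R h \<le> kappa \<tau> pGmax wG wD")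
  case True
  then show ?thesis using assms by (simp add: cost_def)
next
  case False
  then have "wD / (wG * \<tau>) < p" using assms(3,4) by (auto simp: kappa_def)
  then have "wD < wG * p * \<tau>" using assms(1,2) by (simp add: divide_less_eq mult.commute mult.left_commute)
  then show ?thesis using False by (simp add: cost_def)
qed

lemma served_power_ge_pinv:
  assumes "\<tau> > 0" "W > 0" "s2 > 0" "h > 0"
    and "IG + IH + ID = 1" "IG \<in> {0, 1}" "IH \<in> {0, 1}" "ID \<in> {0, 1}"
    and "IG * rate \<tau> W s2 pG hG + IH * rate \<tau> W s2 pH h \<ge> (1 - ID) * R" "pH \<ge> 0"
  shows "IH * pinv \<tau> W s2 R h \<le> pH"
proof (cases "IH = 1")
  case True
  then have "rate \<tau> W s2 pH h \<ge> R" using assms(5-9) by auto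
  then show ?thesis using pinv_le_of_rate_ge[OF assms(1-4,10)] True by simp
qed (use assms in auto)

lemma cost_le_block_objective:
  assumes "\<tau> > 0" "W > 0" "s2 > 0" "hG > 0" "wG > 0"
    and "IG + IH + ID = 1" "IG \<in> {0, 1}" "IH \<in> {0, 1}" "ID \<in> {0, 1}"
    and "IG * rate \<tau> W s2 pG hG + IH * rate \<tau> W s2 pH hH \<ge> (1 - ID) * R"
    and "0 \<le> pG" "pG \<le> pGmax"
  shows "(1 - IH) * cost \<tau> W s2 R pGmax wG wD hG \<le> wG * pG * \<tau> + wD * ID"
proof -
  have "0 \<le> wG * pG * \<tau>" using assms by simp
  consider "IH = 1" "IG = 0" "ID = 0" | "IG = 1" "IH = 0" "ID = 0" | "ID = 1" "IG = 0" "IH = 0"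
    using assms(6-9) by auto
  then show ?thesis
  proof cases
    case 2
    then have "rate \<tau> W s2 pG hG \<ge> R" using assms(10) by simp
    then have "pinv \<tau> W s2 R hG \<le> pG" using pinv_le_of_rate_ge assms(1-4,11) by blast
    then show ?thesis using cost_le_transmit assms(1,5,12) 2 by simp
  qed (use \<open>0 \<le> wG * pG * \<tau>\<close> cost_le_wD[OF assms(1,5), of W s2 R pGmax wD hG] in auto)
qed

lemma feasP1_assign:
  assumes "\<tau> > 0" "W > 0" "s2 > 0" "R \<ge> 0" "pGmax \<ge> 0"
    and "\<And>i. hG i > 0" "\<And>i. hH i > 0"
    and "feasP1hat N \<tau> W s2 R pHmax E hH \<alpha>"
  shows "feasP1 N \<tau> W s2 R pGmax pHmax E hG hH (assign \<tau> W s2 R pGmax wG wD hG hH \<alpha>)"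
proof -
  have "kappa \<tau> pGmax wG wD \<le> pGmax" by (simp add: kappa_def)
  moreover note rate_pinv[OF assms(1-3,6)] rate_pinv[OF assms(1-3,7)]
    pinv_nonneg[OF assms(1-3,6,4)] pinv_nonneg[OF assms(1-3,7,4)]
  ultimately show ?thesis
    using assms(5) unfolding feasP1_def assign_def Let_def prod.case
    apply (intro ballI)
    subgoal for i
      using assms(8)[unfolded feasP1hat_def, THEN bspec, of i]
      by (cases "\<alpha> i = 0") (auto simp: mult.assoc)
    done
qed

lemma objP1_assign:
  assumes "\<And>i. i \<in> {1..N} \<Longrightarrow> \<alpha> i \<in> {0, 1}"
  shows "objP1 N \<tau> wG wD (assign \<tau> W s2 R pGmax wG wD hG hH \<alpha>)
       = objP1hat N \<tau> W s2 R pGmax wG wD hG \<alpha>"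
  unfolding objP1_def objP1hat_def assign_def Let_def prod.case
  using assms by (intro sum.cong) (auto simp: cost_def)

lemma feasP1hat_of_feasP1:
  assumes "\<tau> > 0" "W > 0" "s2 > 0" "\<And>i. hH i > 0"
    and "feasP1 N \<tau> W s2 R pGmax pHmax E hG hH (IG, IH, ID, pG, pH)"
  shows "feasP1hat N \<tau> W s2 R pHmax E hH IH"
proof -
  note block = assms(5)[unfolded feasP1_def prod.case, THEN bspec]
  have pH_ge: "IH k * pinv \<tau> W s2 R (hH k) \<le> pH k" if "k \<in> {1..N}" for k
    using block[OF that] by (intro served_power_ge_pinv[OF assms(1-4)]) auto
  have "(\<Sum>k=1..i. IH k * pinv \<tau> W s2 R (hH k) * \<tau>) \<le> (\<Sum>l=1..i. E l)" if "i \<in> {1..N}" for i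
  proof -
    have "(\<Sum>k=1..i. IH k * pinv \<tau> W s2 R (hH k) * \<tau>) \<le> (\<Sum>l=1..i. pH l * \<tau>)"
      using that \<open>\<tau> > 0\<close> by (intro sum_mono mult_right_mono pH_ge) auto
    also have "\<dots> \<le> (\<Sum>l=1..i. E l)" using block[OF that] by auto
    finally show ?thesis .
  qed
  moreover have "IH i * pinv \<tau> W s2 R (hH i) \<le> pHmax" "IH i \<in> {0, 1}" if "i \<in> {1..N}" for i
    using pH_ge[OF that] block[OF that] by auto
  ultimately show ?thesis unfolding feasP1hat_def by blast
qed

lemma objP1hat_le_objP1:
  assumes "\<tau> > 0" "W > 0" "s2 > 0" "\<And>i. hG i > 0" "wG > 0"
    and "feasP1 N \<tau> W s2 R pGmax pHmax E hG hH (IG, IH, ID, pG, pH)"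
  shows "objP1hat N \<tau> W s2 R pGmax wG wD hG IH \<le> objP1 N \<tau> wG wD (IG, IH, ID, pG, pH)"
  unfolding objP1hat_def objP1_def prod.case
  using assms(6) unfolding feasP1_def prod.case
  by (intro sum_mono cost_le_block_objective[OF assms(1-3) assms(4) assms(5)]) auto

lemma objP1hat_nonneg:
  assumes "\<tau> > 0" "W > 0" "s2 > 0" "R \<ge> 0" "\<And>i. hG i > 0" "wG \<ge> 0" "wD \<ge> 0"
    and "\<And>i. i \<in> {1..N} \<Longrightarrow> \<alpha> i \<in> {0, 1}"
  shows "objP1hat N \<tau> W s2 R pGmax wG wD hG \<alpha> \<ge> 0"
  unfolding objP1hat_def
  using assms(8) cost_nonneg[OF assms(1-3,5,4,6,7)] by (intro sum_nonneg) fastforce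

lemma feasP1hat_zero:
  assumes "pHmax \<ge> 0" "\<And>i. E i \<ge> 0"
  shows "feasP1hat N \<tau> W s2 R pHmax E hH (\<lambda>_. 0)"
  using assms by (auto simp: feasP1hat_def intro: sum_nonneg)

theorem lemma1:
  fixes N :: nat and \<tau> W s2 R pGmax pHmax wG wD :: real
    and E hG hH :: "nat \<Rightarrow> real"
  assumes "\<tau> > 0" "W > 0" "s2 > 0" "R > 0" "pGmax > 0" "pHmax > 0" "wG > 0" "wD > 0"
    and "\<And>i. E i \<ge> 0" "\<And>i. hG i > 0" "\<And>i. hH i > 0"
  shows
    "(\<forall>\<alpha>. feasP1hat N \<tau> W s2 R pHmax E hH \<alpha> \<longrightarrow>
         feasP1 N \<tau> W s2 R pGmax pHmax E hG hH (assign \<tau> W s2 R pGmax wG wD hG hH \<alpha>)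
       \<and> objP1 N \<tau> wG wD (assign \<tau> W s2 R pGmax wG wD hG hH \<alpha>)
           = objP1hat N \<tau> W s2 R pGmax wG wD hG \<alpha>)
   \<and> (INF d \<in> {d. feasP1 N \<tau> W s2 R pGmax pHmax E hG hH d}. objP1 N \<tau> wG wD d)
       = (INF \<alpha> \<in> {\<alpha>. feasP1hat N \<tau> W s2 R pHmax E hH \<alpha>}. objP1hat N \<tau> W s2 R pGmax wG wD hG \<alpha>)
   \<and> (\<forall>\<alpha>. optP1hat N \<tau> W s2 R pGmax pHmax wG wD E hG hH \<alpha> \<longrightarrow>
         optP1 N \<tau> W s2 R pGmax pHmax wG wD E hG hH (assign \<tau> W s2 R pGmax wG wD hG hH \<alpha>))"
proof -
  let ?A = "{d. feasP1 N \<tau> W s2 R pGmax pHmax E hG hH d}"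
    and ?B = "{\<alpha>. feasP1hat N \<tau> W s2 R pHmax E hH \<alpha>}"
    and ?f = "objP1 N \<tau> wG wD" and ?g = "objP1hat N \<tau> W s2 R pGmax wG wD hG"
    and ?\<phi> = "assign \<tau> W s2 R pGmax wG wD hG hH"
  have binary: "\<alpha> i \<in> {0, 1}" if "\<alpha> \<in> ?B" "i \<in> {1..N}" for \<alpha> i
    using that by (simp add: feasP1hat_def)
  have forward: "?\<phi> \<alpha> \<in> ?A \<and> ?f (?\<phi> \<alpha>) = ?g \<alpha>" if "\<alpha> \<in> ?B" for \<alpha>
    using feasP1_assign objP1_assign binary that assms(1-5,10,11) by auto
  have backward: "\<exists>\<alpha>\<in>?B. ?g \<alpha> \<le> ?f d" if "d \<in> ?A" for d
  proof -
    obtain IG IH ID pG pH where d: "d = (IG, IH, ID, pG, pH)" by (cases d) auto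
    then have feas: "feasP1 N \<tau> W s2 R pGmax pHmax E hG hH (IG, IH, ID, pG, pH)" using that by simp
    have "IH \<in> ?B" using assms(1-3,11) feas by (simp add: feasP1hat_of_feasP1)
    moreover have "?g IH \<le> ?f d"
      unfolding d using assms(1-3,10,7) feas by (rule objP1hat_le_objP1)
    ultimately show ?thesis by blast
  qed
  have "?B \<noteq> {}" using feasP1hat_zero assms(6,9) less_imp_le by blast
  moreover have "bdd_below (?g ` ?B)"
    using objP1hat_nonneg binary assms(1-4,7,8,10) by (auto intro!: bdd_belowI2[of _ 0])
  ultimately have "(INF d\<in>?A. ?f d) = (INF \<alpha>\<in>?B. ?g \<alpha>)"
    using forward backward by (rule INF_eq_of_reduction)
  moreover have "optP1 N \<tau> W s2 R pGmax pHmax wG wD E hG hH (?\<phi> \<alpha>)"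
    if "optP1hat N \<tau> W s2 R pGmax pHmax wG wD E hG hH \<alpha>" for \<alpha>
    using minimizer_of_reduction[OF forward backward, of \<alpha>] that
    unfolding optP1_def optP1hat_def by auto
  ultimately show ?thesis using forward by auto
qed

end
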